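(* Let $\mathcal{C}$ be a linear $[n,k]$ code over a finite field $\mathbb{F}_q$ with all-symbol locality $r$, whose distinct recovery sets are $L_1,\dots,L_m$, and suppose $\mathcal{C}$ is a PMR code with respect to the admissible puncturing pattern $e=\{e_1,\dots,e_m\}$. After reordering coordinates so that $e_i=i$ for $i=1,\dots,m$, and writing $k_0=n-m$ and $\Delta=n-k-m$, the code $\mathcal{C}$ has a parity-check matrix of the form $$H=\begin{bmatrix} I_m & F\\ 0 & H_{\mathrm{MDS}}\end{bmatrix},$$ where $F$ is an $m\times k_0$ matrix, $H_{\mathrm{MDS}}$ is a $\Delta\times k_0$ matrix that is a parity-check matrix of a $[k_0,k_0-\Delta]$ MDS code, and the $i$-th row $\underline{x}_i^t$ of $F$ has Hamming weight at most $r$ for every $i=1,\dots,m$.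
   Context: An $[n,k]$ linear code $\mathcal{C}$ has all-symbol locality $r$ if for every coordinate $i\in[n]$ the dual code $\mathcal{C}^\perp$ contains a codeword whose support $L_i$ satisfies $i\in L_i$ and $|L_i|\le r+1$; $L_i$ is the recovery set of coordinate $i$, and it is assumed that $L_i\not\subset\bigcup_{j\ne i}L_j$. Such a code with minimum distance $d$ is said to be optimal if $d=(n-k+1)-(\lceil k/r\rceil-1)$. With distinct recovery sets $L_1,\dots,L_m$, a set $e=\{e_1,\dots,e_m\}$ is an admissible puncturing pattern if $e_i\in L_i\setminus\bigcup_{j\in[m],j\neq i}L_j$ for all $i$. A PMR (partially maximally recoverable) code is an optimal all-symbol locality code which becomes an MDS code upon puncturing the coordinates of some admissible puncturing pattern. *)

theory Defs
  imports "Jordan_Normal_Form.VS_Connect"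
begin

text \<open>Vectors of length n over a field are elements of carrier_vec n (coordinates 0..n-1).\<close>

definition hweight :: "'a::zero vec \<Rightarrow> nat" where
  "hweight x = card {i. i < dim_vec x \<and> x $ i \<noteq> 0}"

definition vsupp :: "'a::zero vec \<Rightarrow> nat set" where
  "vsupp x = {i. i < dim_vec x \<and> x $ i \<noteq> 0}"

definition linear_code :: "'a::field vec set \<Rightarrow> nat \<Rightarrow> nat \<Rightarrow> bool" where
  "linear_code C n k \<longleftrightarrow>
     subspace class_ring C (module_vec TYPE('a) n) \<and>
     vectorspace.dim class_ring ((module_vec TYPE('a) n)\<lparr>carrier := C\<rparr>) = k"

definition min_dist :: "'a::field vec set \<Rightarrow> nat" where
  "min_dist C = Min (hweight ` {c \<in> C. c \<noteq> 0\<^sub>v (dim_vec c)})"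

definition dual_code :: "nat \<Rightarrow> 'a::field vec set \<Rightarrow> 'a vec set" where
  "dual_code n C = {y \<in> carrier_vec n. \<forall>c \<in> C. y \<bullet> c = 0}"

definition MDS_code :: "'a::field vec set \<Rightarrow> nat \<Rightarrow> nat \<Rightarrow> bool" where
  "MDS_code C n k \<longleftrightarrow> linear_code C n k \<and> min_dist C = n - k + 1"

definition parity_check :: "'a::field mat \<Rightarrow> nat \<Rightarrow> 'a vec set \<Rightarrow> bool" where
  "parity_check H n C \<longleftrightarrow> dim_col H = n \<and>
     C = {c \<in> carrier_vec n. H *\<^sub>v c = 0\<^sub>v (dim_row H)}"

definition puncture_first :: "nat \<Rightarrow> nat \<Rightarrow> 'a vec set \<Rightarrow> 'a vec set" where
  "puncture_first n m C = (\<lambda>c. vec (n - m) (\<lambda>j. c $ (j + m))) ` C"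

text \<open>All-symbol locality r with recovery sets: Rec i is the recovery set of coordinate i,
  the support of a dual codeword, containing i, of size at most r+1; the distinct recovery sets
  are L 0, ..., L (m-1), and none is covered by the union of the others.\<close>
definition locality_with :: "'a::field vec set \<Rightarrow> nat \<Rightarrow> nat \<Rightarrow> (nat \<Rightarrow> nat set)
    \<Rightarrow> nat \<Rightarrow> (nat \<Rightarrow> nat set) \<Rightarrow> bool" where
  "locality_with C n r Rec m L \<longleftrightarrow>
     (\<forall>i<n. (\<exists>y \<in> dual_code n C. vsupp y = Rec i) \<and> i \<in> Rec i \<and> card (Rec i) \<le> r + 1) \<and>
     inj_on L {..<m} \<and> L ` {..<m} = Rec ` {..<n} \<and>
     (\<forall>i<m. \<not> L i \<subseteq> (\<Union>j \<in> {..<m} - {i}. L j))"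

definition optimal_LRC :: "'a::field vec set \<Rightarrow> nat \<Rightarrow> nat \<Rightarrow> nat \<Rightarrow> bool" where
  "optimal_LRC C n k r \<longleftrightarrow>
     int (min_dist C) = (int n - int k + 1) - (\<lceil>real k / real r\<rceil> - 1)"

definition admissible_pattern :: "nat \<Rightarrow> (nat \<Rightarrow> nat set) \<Rightarrow> (nat \<Rightarrow> nat) \<Rightarrow> bool" where
  "admissible_pattern m L e \<longleftrightarrow>
     (\<forall>i<m. e i \<in> L i - (\<Union>j \<in> {..<m} - {i}. L j))"

end

theory Submission
  imports Defs "Jordan_Normal_Form.DL_Rank"
begin

text \<open>Normalise the local check of each recovery set \<open>L\<^sub>i\<close> to be 1 at its own punctured
  coordinate \<open>e\<^sub>i = i\<close>. Admissibility makes it vanish at the other punctured coordinates, so these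
  checks are the rows of \<open>[I\<^sub>m | F]\<close>, and a row of \<open>F\<close> has weight \<open>|L\<^sub>i| - 1 \<le> r\<close>. They express
  the punctured symbols through the remaining ones, so puncturing is injective on \<open>C\<close> and the
  punctured code \<open>C'\<close> still has dimension \<open>k\<close>. As \<open>C'\<close> is MDS, any two codewords agreeing on
  \<open>k\<close> coordinates coincide; thus the first \<open>k\<close> coordinates are an information set and \<open>C'\<close> has
  a systematic parity-check matrix \<open>H\<^sub>M\<^sub>D\<^sub>S\<close>, which completes the checks \<open>[I\<^sub>m | F]\<close> to a
  parity-check matrix of \<open>C\<close>.\<close>

section \<open>Vectors and subspaces over a field\<close>

lemma finite_carrier_vec: "finite (carrier_vec n :: 'a::finite vec set)"
proof -
  have "carrier_vec n \<subseteq> vec_of_list ` {xs :: 'a list. set xs \<subseteq> UNIV \<and> length xs = n}"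
    by (auto intro!: image_eqI[where x = "list_of_vec _"] simp: vec_list)
  then show ?thesis
    using finite_lists_length_eq[of "UNIV :: 'a set" n] by (auto intro: finite_subset)
qed

lemma minus_vec_eq_zero_iff:
  fixes a b :: "'a::ab_group_add vec"
  assumes "a \<in> carrier_vec n" "b \<in> carrier_vec n"
  shows "a - b = 0\<^sub>v n \<longleftrightarrow> a = b"
  using assms by (auto simp: vec_eq_iff)

lemma add_vec_eq_zero_iff:
  fixes a b :: "'a::ab_group_add vec"
  assumes "a \<in> carrier_vec n" "b \<in> carrier_vec n"
  shows "a + b = 0\<^sub>v n \<longleftrightarrow> a = - b"
  using assms by (auto simp: vec_eq_iff eq_neg_iff_add_eq_0)

lemma subspace_vec_carrier:
  fixes S :: "'a::field vec set"
  assumes "subspace class_ring S (module_vec TYPE('a) n)"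
  shows "S \<subseteq> carrier_vec n"
  using assms unfolding subspace_def submodule_def by (auto simp: module_vec_simps)

lemma subspace_vec_zero:
  fixes S :: "'a::field vec set"
  assumes "subspace class_ring S (module_vec TYPE('a) n)"
  shows "0\<^sub>v n \<in> S"
  using assms unfolding subspace_def submodule_def by (auto simp: module_vec_simps)

lemma subspace_vec_add:
  fixes S :: "'a::field vec set"
  assumes "subspace class_ring S (module_vec TYPE('a) n)" "x \<in> S" "y \<in> S"
  shows "x + y \<in> S"
  using assms unfolding subspace_def submodule_def by (auto simp: module_vec_simps)

lemma subspace_vec_smult:
  fixes S :: "'a::field vec set"
  assumes "subspace class_ring S (module_vec TYPE('a) n)" "x \<in> S"
  shows "a \<cdot>\<^sub>v x \<in> S"
  using assms unfolding subspace_def submodule_def by (auto simp: module_vec_simps)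

lemma subspace_vec_diff:
  fixes S :: "'a::field vec set"
  assumes S: "subspace class_ring S (module_vec TYPE('a) n)" and "x \<in> S" "y \<in> S"
  shows "x - y \<in> S"
proof -
  have "x - y = x + (-1) \<cdot>\<^sub>v y"
    using assms subspace_vec_carrier[OF S] by (intro eq_vecI) auto
  then show ?thesis using assms by (simp add: subspace_vec_add subspace_vec_smult)
qed

lemma subspace_vec_mult_mat_vec:
  fixes S :: "'a::field vec set"
  assumes S: "subspace class_ring S (module_vec TYPE('a) n)"
    and G: "G \<in> carrier_mat n k" and cols: "\<And>j. j < k \<Longrightarrow> col G j \<in> S"
    and a: "a \<in> carrier_vec k"
  shows "G *\<^sub>v a \<in> S"
proof -
  have partial: "vec n (\<lambda>i. \<Sum>j<q. G $$ (i, j) * a $ j) \<in> S" if "q \<le> k" for q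
    using that
  proof (induction q)
    case 0
    then show ?case using subspace_vec_zero[OF S] by (simp add: zero_vec_def)
  next
    case (Suc q)
    have step: "vec n (\<lambda>i. \<Sum>j<Suc q. G $$ (i, j) * a $ j)
        = vec n (\<lambda>i. \<Sum>j<q. G $$ (i, j) * a $ j) + a $ q \<cdot>\<^sub>v col G q"
      using G Suc.prems by (intro eq_vecI) (auto simp: mult.commute)
    have "vec n (\<lambda>i. \<Sum>j<q. G $$ (i, j) * a $ j) + a $ q \<cdot>\<^sub>v col G q \<in> S"
      using Suc cols[of q] by (intro subspace_vec_add[OF S] subspace_vec_smult[OF S]) auto
    then show ?case by (simp only: step)
  qed
  have "G *\<^sub>v a = vec n (\<lambda>i. \<Sum>j<k. G $$ (i, j) * a $ j)"
    using G a by (intro eq_vecI) (auto simp: scalar_prod_def atLeast0LessThan)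
  then show ?thesis using partial[of k] by simp
qed

lemma vectorspace_fin_dim_of_finite:
  assumes "vectorspace K V" "finite (carrier V)"
  shows "vectorspace.fin_dim K V"
proof -
  interpret vectorspace K V by fact
  show ?thesis unfolding fin_dim_def
    using in_own_span[of "carrier V"] span_is_subset2[of "carrier V"] assms(2) by auto
qed

lemma subspace_vec_vectorspace:
  fixes S :: "'a::field vec set"
  assumes "subspace class_ring S (module_vec TYPE('a) n)"
  shows "vectorspace class_ring ((module_vec TYPE('a) n)\<lparr>carrier := S\<rparr>)"
  using vectorspace.subspace_is_vs[OF vec_vs assms] .

lemma subspace_vec_fin_dim:
  fixes S :: "'a::{finite,field} vec set"
  assumes "subspace class_ring S (module_vec TYPE('a) n)"
  shows "vectorspace.fin_dim class_ring ((module_vec TYPE('a) n)\<lparr>carrier := S\<rparr>)"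
  using subspace_vec_carrier[OF assms] finite_carrier_vec[where n = n and 'a = 'a]
  by (intro vectorspace_fin_dim_of_finite[OF subspace_vec_vectorspace[OF assms]])
    (auto intro: finite_subset)

lemma subspace_vec_dim_le:
  fixes S :: "'a::{finite,field} vec set"
  assumes "subspace class_ring S (module_vec TYPE('a) n)"
  shows "vectorspace.dim class_ring ((module_vec TYPE('a) n)\<lparr>carrier := S\<rparr>) \<le> n"
proof -
  interpret vec_space "TYPE('a)" n .
  show ?thesis using subspace_dim[OF assms _ subspace_vec_fin_dim[OF assms]] dim_is_n by simp
qed

lemma subspace_vec_full_dim_eq_carrier:
  fixes S :: "'a::{finite,field} vec set"
  assumes S: "subspace class_ring S (module_vec TYPE('a) n)"
    and dim: "vectorspace.dim class_ring ((module_vec TYPE('a) n)\<lparr>carrier := S\<rparr>) = n"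
  shows "S = carrier_vec n"
proof -
  interpret vec_space "TYPE('a)" n .
  interpret W: vectorspace class_ring "(module_vec TYPE('a) n)\<lparr>carrier := S\<rparr>"
    by (rule subspace_vec_vectorspace[OF S])
  obtain B where B: "finite B" "W.basis B"
    using W.finite_basis_exists[OF subspace_vec_fin_dim[OF S]] by blast
  have submod: "submodule class_ring S (module_vec TYPE('a) n)"
    using S unfolding subspace_def by auto
  have BS: "B \<subseteq> S" using B(2) unfolding W.basis_def by auto
  have "lin_indpt B"
    using B(2) span_li_not_depend(2)[OF BS submod] unfolding W.basis_def by auto
  moreover have "card B = n" using W.dim_basis[OF B] dim by simp
  ultimately have "basis B"
    using B(1) BS subspace_vec_carrier[OF S] dim_is_n by (intro dim_li_is_basis) auto
  then have "carrier_vec n \<subseteq> S"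
    using span_is_subset[OF BS submod] unfolding basis_def by auto
  then show ?thesis using subspace_vec_carrier[OF S] by auto
qed

lemma subspace_vec_inj_linear_image:
  fixes S :: "'a::{finite,field} vec set" and f :: "'a vec \<Rightarrow> 'a vec"
  assumes S: "subspace class_ring S (module_vec TYPE('a) n)"
    and f_carrier: "\<And>x. x \<in> S \<Longrightarrow> f x \<in> carrier_vec p"
    and f_add: "\<And>x y. x \<in> S \<Longrightarrow> y \<in> S \<Longrightarrow> f (x + y) = f x + f y"
    and f_smult: "\<And>a x. x \<in> S \<Longrightarrow> f (a \<cdot>\<^sub>v x) = a \<cdot>\<^sub>v f x"
    and inj: "inj_on f S"
  shows "subspace class_ring (f ` S) (module_vec TYPE('a) p)"
    and "vectorspace.dim class_ring ((module_vec TYPE('a) p)\<lparr>carrier := f ` S\<rparr>)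
       = vectorspace.dim class_ring ((module_vec TYPE('a) n)\<lparr>carrier := S\<rparr>)"
proof -
  interpret V: vectorspace class_ring "(module_vec TYPE('a) n)\<lparr>carrier := S\<rparr>"
    by (rule subspace_vec_vectorspace[OF S])
  interpret W: vectorspace class_ring "module_vec TYPE('a) p" by (rule vec_vs)
  interpret f: linear_map class_ring "(module_vec TYPE('a) n)\<lparr>carrier := S\<rparr>"
      "module_vec TYPE('a) p" f
    by unfold_locales
      (use f_carrier f_add f_smult in \<open>auto simp: LinearCombinations.module_hom_def module_vec_simps\<close>)
  have im: "f.imT = f ` S" unfolding f.im_def by simp
  show "subspace class_ring (f ` S) (module_vec TYPE('a) p)"
    using f.imT_is_subspace im by simp
  have "vectorspace.dim class_ring (V.vs f.kerT) = 0"
    by (rule f.inj_imp_dim_ker0) (use inj in simp)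
  then show "vectorspace.dim class_ring ((module_vec TYPE('a) p)\<lparr>carrier := f ` S\<rparr>)
      = vectorspace.dim class_ring ((module_vec TYPE('a) n)\<lparr>carrier := S\<rparr>)"
    using f.rank_nullity[OF subspace_vec_fin_dim[OF S]] im by simp
qed

section \<open>Systematic parity-check matrices\<close>

lemma min_dist_le_hweight:
  assumes "finite C" "c \<in> C" "c \<noteq> 0\<^sub>v (dim_vec c)"
  shows "min_dist C \<le> hweight c"
  unfolding min_dist_def using assms by (intro Min_le) auto

lemma MDS_code_inj_on_vec_first:
  fixes C :: "'a::{finite,field} vec set"
  assumes mds: "MDS_code C N k"
  shows "inj_on (\<lambda>x. vec_first x k) C"
proof (rule inj_onI)
  fix x y assume x: "x \<in> C" and y: "y \<in> C" and eq: "vec_first x k = vec_first y k"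
  have prefix: "\<forall>i<k. x $ i = y $ i"
  proof (intro allI impI)
    fix i assume "i < k"
    then show "x $ i = y $ i" using arg_cong[OF eq, of "\<lambda>v. v $ i"] by (simp add: vec_first_def)
  qed
  have S: "subspace class_ring C (module_vec TYPE('a) N)"
    using mds unfolding MDS_code_def linear_code_def by auto
  have C_carrier: "C \<subseteq> carrier_vec N" by (rule subspace_vec_carrier[OF S])
  have x_carrier: "x \<in> carrier_vec N" and y_carrier: "y \<in> carrier_vec N"
    using x y C_carrier by auto
  have "finite C" using finite_carrier_vec C_carrier by (rule finite_subset[rotated])
  have "x - y \<in> C" by (rule subspace_vec_diff[OF S x y])
  have "x - y = 0\<^sub>v N"
  proof (rule ccontr)
    assume nonzero: "x - y \<noteq> 0\<^sub>v N"
    have "{i. i < dim_vec (x - y) \<and> (x - y) $ i \<noteq> 0} \<subseteq> {k..<N}"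
      using x_carrier y_carrier prefix by auto (meson not_less)
    then have "hweight (x - y) \<le> N - k"
      unfolding hweight_def by (metis card_atLeastLessThan card_mono finite_atLeastLessThan)
    moreover have "min_dist C \<le> hweight (x - y)"
      using min_dist_le_hweight[OF \<open>finite C\<close> \<open>x - y \<in> C\<close>] nonzero y_carrier by auto
    ultimately show False using mds unfolding MDS_code_def by simp
  qed
  then show "x = y" using minus_vec_eq_zero_iff[OF x_carrier y_carrier] by simp
qed

text \<open>\<open>[A | -I]\<close>, the check matrix of the systematic code \<open>{u @ A u}\<close>.\<close>

definition systematic_check_mat :: "'a::ring_1 mat \<Rightarrow> 'a mat" where
  "systematic_check_mat A = mat (dim_row A) (dim_col A + dim_row A)
     (\<lambda>(i, l). if l < dim_col A then A $$ (i, l) else if l = dim_col A + i then -1 else 0)"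

lemma systematic_check_mat_carrier:
  "A \<in> carrier_mat K k \<Longrightarrow> systematic_check_mat A \<in> carrier_mat K (k + K)"
  unfolding systematic_check_mat_def by auto

lemma systematic_check_mat_mult_append:
  fixes A :: "'a::ring_1 mat"
  assumes A: "A \<in> carrier_mat K k" and u: "u \<in> carrier_vec k" and w: "w \<in> carrier_vec K"
  shows "systematic_check_mat A *\<^sub>v (u @\<^sub>v w) = A *\<^sub>v u - w"
proof (rule eq_vecI)
  fix i assume "i < dim_vec (A *\<^sub>v u - w)"
  then have i: "i < K" using w by simp
  have "(systematic_check_mat A *\<^sub>v (u @\<^sub>v w)) $ i = row (systematic_check_mat A) i \<bullet> (u @\<^sub>v w)"
    using i systematic_check_mat_carrier[OF A] by simp
  also have "row (systematic_check_mat A) i = row A i @\<^sub>v - unit_vec K i"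
    using A i by (intro eq_vecI) (auto simp: systematic_check_mat_def)
  also have "(row A i @\<^sub>v - unit_vec K i) \<bullet> (u @\<^sub>v w) = row A i \<bullet> u + (- unit_vec K i) \<bullet> w"
    using A u w i by (intro scalar_prod_append) auto
  also have "\<dots> = (A *\<^sub>v u - w) $ i"
    using A w i by (simp add: scalar_prod_uminus_left)
  finally show "(systematic_check_mat A *\<^sub>v (u @\<^sub>v w)) $ i = (A *\<^sub>v u - w) $ i" .
qed (use A w in \<open>simp add: systematic_check_mat_def\<close>)

lemma subspace_vec_vec_first_image:
  fixes S :: "'a::{finite,field} vec set"
  assumes S: "subspace class_ring S (module_vec TYPE('a) (k + K))"
    and dim: "vectorspace.dim class_ring ((module_vec TYPE('a) (k + K))\<lparr>carrier := S\<rparr>) = k"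
    and prefix_inj: "inj_on (\<lambda>x. vec_first x k) S"
  shows "(\<lambda>x. vec_first x k) ` S = carrier_vec k"
proof (rule subspace_vec_full_dim_eq_carrier)
  have S_carrier: "S \<subseteq> carrier_vec (k + K)" by (rule subspace_vec_carrier[OF S])
  have add: "vec_first (x + y) k = vec_first x k + vec_first y k" if "x \<in> S" "y \<in> S" for x y
    using that S_carrier by (intro eq_vecI) (auto simp: vec_first_def)
  have smult: "vec_first (a \<cdot>\<^sub>v x) k = a \<cdot>\<^sub>v vec_first x k" if "x \<in> S" for a x
    using that S_carrier by (intro eq_vecI) (auto simp: vec_first_def)
  note image = subspace_vec_inj_linear_image[OF S _ add smult prefix_inj, of k]
  show "subspace class_ring ((\<lambda>x. vec_first x k) ` S) (module_vec TYPE('a) k)"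
    and "vectorspace.dim class_ring
           ((module_vec TYPE('a) k)\<lparr>carrier := (\<lambda>x. vec_first x k) ` S\<rparr>) = k"
    using image dim by auto
qed

lemma subspace_vec_systematic_generator:
  fixes S :: "'a::field vec set"
  assumes S: "subspace class_ring S (module_vec TYPE('a) (k + K))"
    and onto: "(\<lambda>x. vec_first x k) ` S = carrier_vec k"
  obtains A where "A \<in> carrier_mat K k"
    and "\<And>u. u \<in> carrier_vec k \<Longrightarrow> u @\<^sub>v (A *\<^sub>v u) \<in> S"
proof -
  have "\<forall>j<k. \<exists>g\<in>S. vec_first g k = unit_vec k j" using onto by (metis imageE unit_vec_carrier)
  then obtain g where g: "\<And>j. j < k \<Longrightarrow> g j \<in> S \<and> vec_first (g j) k = unit_vec k j"
    by metis
  have g_carrier: "g j \<in> carrier_vec (k + K)" if "j < k" for j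
    using g[OF that] subspace_vec_carrier[OF S] by auto
  have g_prefix: "g j $ l = (if l = j then 1 else 0)" if "j < k" "l < k" for j l
  proof -
    have "vec_first (g j) k $ l = unit_vec k j $ l" using g[OF that(1)] by simp
    then show ?thesis using that by (simp add: vec_first_def)
  qed
  define A where "A = mat K k (\<lambda>(i, j). g j $ (k + i))"
  define G where "G = mat (k + K) k (\<lambda>(l, j). g j $ l)"
  have "u @\<^sub>v (A *\<^sub>v u) \<in> S" if u: "u \<in> carrier_vec k" for u
  proof -
    have "col G j = g j" if "j < k" for j
      using that g_carrier[OF that] by (intro eq_vecI) (auto simp: G_def)
    then have "G *\<^sub>v u \<in> S"
      using g u by (intro subspace_vec_mult_mat_vec[OF S]) (auto simp: G_def)
    moreover have "G *\<^sub>v u = u @\<^sub>v (A *\<^sub>v u)"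
    proof (rule eq_vecI)
      fix l assume "l < dim_vec (u @\<^sub>v (A *\<^sub>v u))"
      then have l: "l < k + K" using u by (simp add: A_def)
      show "(G *\<^sub>v u) $ l = (u @\<^sub>v (A *\<^sub>v u)) $ l"
      proof (cases "l < k")
        case True
        then have "row G l = unit_vec k l"
          using g_prefix by (intro eq_vecI) (auto simp: G_def)
        then show ?thesis using True u l by (simp add: G_def)
      next
        case False
        then have "row G l = row A (l - k)"
          using l by (intro eq_vecI) (auto simp: G_def A_def)
        then show ?thesis using False u l by (simp add: G_def A_def)
      qed
    qed (use u in \<open>simp add: G_def A_def\<close>)
    ultimately show ?thesis by simp
  qed
  then show ?thesis using that[of A] by (simp add: A_def)
qed

lemma subspace_vec_systematic_form:
  fixes S :: "'a::{finite,field} vec set"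
  assumes S: "subspace class_ring S (module_vec TYPE('a) (k + K))"
    and dim: "vectorspace.dim class_ring ((module_vec TYPE('a) (k + K))\<lparr>carrier := S\<rparr>) = k"
    and prefix_inj: "inj_on (\<lambda>x. vec_first x k) S"
  obtains A where "A \<in> carrier_mat K k"
    and "\<And>x. x \<in> S \<longleftrightarrow> x \<in> carrier_vec (k + K) \<and> vec_last x K = A *\<^sub>v vec_first x k"
proof -
  obtain A where A: "A \<in> carrier_mat K k"
    and lift: "\<And>u. u \<in> carrier_vec k \<Longrightarrow> u @\<^sub>v (A *\<^sub>v u) \<in> S"
    using subspace_vec_systematic_generator[OF S subspace_vec_vec_first_image[OF S dim prefix_inj]]
    by blast
  have "x \<in> S \<longleftrightarrow> x \<in> carrier_vec (k + K) \<and> vec_last x K = A *\<^sub>v vec_first x k" for x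
  proof
    assume x: "x \<in> S"
    let ?y = "vec_first x k @\<^sub>v (A *\<^sub>v vec_first x k)"
    have "vec_first ?y k = vec_first x k"
      by (intro eq_vecI) (auto simp: vec_first_def)
    then have "x = ?y" using prefix_inj x lift[of "vec_first x k"] by (auto dest: inj_onD)
    moreover have "vec_last ?y K = A *\<^sub>v vec_first x k"
      using A by (intro eq_vecI) (auto simp: vec_last_def)
    ultimately show "x \<in> carrier_vec (k + K) \<and> vec_last x K = A *\<^sub>v vec_first x k"
      using x subspace_vec_carrier[OF S] by auto
  next
    assume "x \<in> carrier_vec (k + K) \<and> vec_last x K = A *\<^sub>v vec_first x k"
    then show "x \<in> S" using lift[of "vec_first x k"] vec_first_last_append[of x k K] by simp
  qed
  then show ?thesis using that A by blast
qed

lemma subspace_vec_systematic_parity_check: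
  fixes S :: "'a::{finite,field} vec set"
  assumes S: "subspace class_ring S (module_vec TYPE('a) N)"
    and dim: "vectorspace.dim class_ring ((module_vec TYPE('a) N)\<lparr>carrier := S\<rparr>) = k"
    and prefix_inj: "inj_on (\<lambda>x. vec_first x k) S"
  shows "\<exists>HM \<in> carrier_mat (N - k) N. parity_check HM N S"
proof -
  define K where "K = N - k"
  have N: "N = k + K" using subspace_vec_dim_le[OF S] dim by (simp add: K_def)
  obtain A where A: "A \<in> carrier_mat K k"
    and mem: "\<And>x. x \<in> S \<longleftrightarrow> x \<in> carrier_vec (k + K) \<and> vec_last x K = A *\<^sub>v vec_first x k"
    using subspace_vec_systematic_form[OF S[unfolded N] dim[unfolded N] prefix_inj] by blast
  have check: "systematic_check_mat A *\<^sub>v x = 0\<^sub>v K \<longleftrightarrow> vec_last x K = A *\<^sub>v vec_first x k"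
    if x: "x \<in> carrier_vec (k + K)" for x
  proof -
    have "systematic_check_mat A *\<^sub>v x = A *\<^sub>v vec_first x k - vec_last x K"
      using systematic_check_mat_mult_append[OF A vec_first_carrier[of x k] vec_last_carrier[of x K]]
      by (simp only: vec_first_last_append[OF x])
    then show ?thesis
      using minus_vec_eq_zero_iff[OF mult_mat_vec_carrier[OF A vec_first_carrier] vec_last_carrier]
      by auto
  qed
  have "S = {x \<in> carrier_vec (k + K). systematic_check_mat A *\<^sub>v x = 0\<^sub>v K}"
    using mem check by blast
  then have "parity_check (systematic_check_mat A) N S"
    unfolding parity_check_def N using systematic_check_mat_carrier[OF A] by (simp add: carrier_matD)
  moreover have "systematic_check_mat A \<in> carrier_mat (N - k) N"
    using systematic_check_mat_carrier[OF A] N by simp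
  ultimately show ?thesis by blast
qed

section \<open>Local checks and puncturing\<close>

lemma hweight_eq_card_vsupp: "hweight x = card (vsupp x)"
  by (simp add: hweight_def vsupp_def)

lemma hweight_unit_vec_append:
  fixes f :: "'a::zero_neq_one vec"
  assumes i: "i < m" and f: "f \<in> carrier_vec N"
  shows "hweight (unit_vec m i @\<^sub>v f) = Suc (hweight f)"
proof -
  have "vsupp (unit_vec m i @\<^sub>v f) = insert i ((+) m ` vsupp f)"
  proof (intro equalityI subsetI)
    fix l assume "l \<in> vsupp (unit_vec m i @\<^sub>v f)"
    then show "l \<in> insert i ((+) m ` vsupp f)"
      using i f by (cases "l < m") (auto simp: vsupp_def intro!: image_eqI[of _ _ "l - m"])
  qed (use i f in \<open>auto simp: vsupp_def\<close>)
  moreover have "i \<notin> (+) m ` vsupp f" using i by auto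
  moreover have "finite (vsupp f)" by (simp add: vsupp_def)
  ultimately show ?thesis by (simp add: hweight_eq_card_vsupp card_image)
qed

lemma locality_with_recovery_set_check:
  assumes "locality_with C n r Rec m L" "i < m"
  shows "\<exists>y \<in> dual_code n C. vsupp y = L i" and "card (L i) \<le> r + 1"
proof -
  have "L i \<in> Rec ` {..<n}" using assms unfolding locality_with_def by blast
  then obtain j where "j < n" "L i = Rec j" by auto
  then show "\<exists>y \<in> dual_code n C. vsupp y = L i" and "card (L i) \<le> r + 1"
    using assms(1) unfolding locality_with_def by auto
qed

lemma admissible_identity_pattern_mem_iff:
  assumes "admissible_pattern m L (\<lambda>i. i)" "i < m" "j < m"
  shows "j \<in> L i \<longleftrightarrow> j = i"
  using assms unfolding admissible_pattern_def by blast

lemma locality_with_admissible_identity_pattern_le: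
  assumes loc: "locality_with C n r Rec m L" and adm: "admissible_pattern m L (\<lambda>i. i)"
  shows "m \<le> n"
proof (cases m)
  case (Suc i)
  obtain y where "y \<in> dual_code n C" "vsupp y = L i"
    using locality_with_recovery_set_check(1)[OF loc, of i] Suc by auto
  moreover have "i \<in> L i" using admissible_identity_pattern_mem_iff[OF adm, of i i] Suc by simp
  ultimately have "i \<in> vsupp y" "y \<in> carrier_vec n" by (auto simp: dual_code_def)
  then show ?thesis using Suc by (simp add: vsupp_def)
qed simp

lemma dual_code_smult:
  assumes "y \<in> dual_code n C" "C \<subseteq> carrier_vec n"
  shows "a \<cdot>\<^sub>v y \<in> dual_code n C"
  using assms unfolding dual_code_def by (auto simp: smult_scalar_prod_distrib subset_iff)

lemma normalized_check_vector:
  fixes y :: "'a::field vec"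
  assumes y: "y \<in> carrier_vec (m + N)" and i: "i < m"
    and prefix_supp: "\<And>l. l < m \<Longrightarrow> y $ l \<noteq> 0 \<longleftrightarrow> l = i"
  shows "inverse (y $ i) \<cdot>\<^sub>v y = unit_vec m i @\<^sub>v vec_last (inverse (y $ i) \<cdot>\<^sub>v y) N"
proof -
  have "vec_first (inverse (y $ i) \<cdot>\<^sub>v y) m = unit_vec m i"
    using prefix_supp[OF i] prefix_supp y i by (intro eq_vecI) (auto simp: vec_first_def)
  then show ?thesis using vec_first_last_append[of "inverse (y $ i) \<cdot>\<^sub>v y" m N] y by simp
qed

lemma locality_with_systematic_checks:
  fixes C :: "'a::field vec set"
  assumes C: "C \<subseteq> carrier_vec (m + N)"
    and loc: "locality_with C (m + N) r Rec m L" and adm: "admissible_pattern m L (\<lambda>i. i)"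
  obtains F where "F \<in> carrier_mat m N"
    and "\<And>i. i < m \<Longrightarrow> unit_vec m i @\<^sub>v row F i \<in> dual_code (m + N) C"
    and "\<And>i. i < m \<Longrightarrow> hweight (row F i) \<le> r"
proof -
  obtain y where y: "\<And>i. i < m \<Longrightarrow> y i \<in> dual_code (m + N) C \<and> vsupp (y i) = L i"
    using locality_with_recovery_set_check(1)[OF loc] by metis
  have y_carrier: "y i \<in> carrier_vec (m + N)" if "i < m" for i
    using y[OF that] by (simp add: dual_code_def)
  have prefix_supp: "y i $ l \<noteq> 0 \<longleftrightarrow> l = i" if "i < m" "l < m" for i l
  proof -
    have "y i $ l \<noteq> 0 \<longleftrightarrow> l \<in> vsupp (y i)" using that y_carrier[OF that(1)] by (simp add: vsupp_def)
    then show ?thesis using y[OF that(1)] admissible_identity_pattern_mem_iff[OF adm that] by simp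
  qed
  define z where "z i = inverse (y i $ i) \<cdot>\<^sub>v y i" for i
  define F where "F = mat m N (\<lambda>(i, j). z i $ (m + j))"
  have z_row: "z i = unit_vec m i @\<^sub>v row F i" if i: "i < m" for i
  proof -
    have "vec_last (z i) N = row F i"
      using i y_carrier[OF i] by (intro eq_vecI) (auto simp: F_def z_def vec_last_def)
    then show ?thesis
      using normalized_check_vector[OF y_carrier[OF i] i prefix_supp[OF i]] by (simp add: z_def)
  qed
  show ?thesis
  proof
    show "F \<in> carrier_mat m N" by (simp add: F_def)
    fix i assume i: "i < m"
    have "z i \<in> dual_code (m + N) C"
      unfolding z_def using dual_code_smult[OF conjunct1[OF y[OF i]] C] .
    then show "unit_vec m i @\<^sub>v row F i \<in> dual_code (m + N) C" by (simp only: z_row[OF i])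
    have "y i $ i \<noteq> 0" using prefix_supp[OF i i] by simp
    then have "vsupp (z i) = vsupp (y i)" by (auto simp: z_def vsupp_def)
    then have "hweight (z i) = card (L i)" using y[OF i] by (simp add: hweight_eq_card_vsupp)
    moreover have "row F i \<in> carrier_vec N" using row_carrier[of F i] by (simp add: F_def)
    ultimately have "Suc (hweight (row F i)) = card (L i)"
      using hweight_unit_vec_append[OF i] z_row[OF i] by metis
    then show "hweight (row F i) \<le> r"
      using locality_with_recovery_set_check(2)[OF loc i] by simp
  qed
qed

lemma puncture_first_eq_vec_last_image:
  assumes "C \<subseteq> carrier_vec (m + N)"
  shows "puncture_first (m + N) m C = (\<lambda>c. vec_last c N) ` C"
  unfolding puncture_first_def using assms
  by (intro image_cong refl eq_vecI) (auto simp: vec_last_def subset_iff add.commute)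

lemma unit_vec_append_scalar_prod:
  fixes f c :: "'a::comm_semiring_1 vec"
  assumes i: "i < m" and f: "f \<in> carrier_vec N" and c: "c \<in> carrier_vec (m + N)"
  shows "(unit_vec m i @\<^sub>v f) \<bullet> c = c $ i + f \<bullet> vec_last c N"
proof -
  have "(unit_vec m i @\<^sub>v f) \<bullet> (vec_first c m @\<^sub>v vec_last c N)
      = unit_vec m i \<bullet> vec_first c m + f \<bullet> vec_last c N"
    using scalar_prod_append[OF unit_vec_carrier f vec_first_carrier vec_last_carrier] .
  moreover have "vec_first c m @\<^sub>v vec_last c N = c" using c by simp
  moreover have "unit_vec m i \<bullet> vec_first c m = c $ i"
    using scalar_prod_left_unit[OF vec_first_carrier i] i by (simp add: vec_first_def)
  ultimately show ?thesis by simp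
qed

lemma systematic_checks_orthogonal_iff:
  fixes F :: "'a::comm_semiring_1 mat"
  assumes F: "F \<in> carrier_mat m N" and c: "c \<in> carrier_vec (m + N)"
  shows "(\<forall>i<m. (unit_vec m i @\<^sub>v row F i) \<bullet> c = 0)
     \<longleftrightarrow> vec_first c m + F *\<^sub>v vec_last c N = 0\<^sub>v m"
proof -
  have "(unit_vec m i @\<^sub>v row F i) \<bullet> c = c $ i + row F i \<bullet> vec_last c N" if "i < m" for i
    using that F c by (intro unit_vec_append_scalar_prod) auto
  then show ?thesis using F c by (auto simp: vec_eq_iff vec_first_def)
qed

lemma vec_eq_if_systematic_checks_vec_last_eq:
  fixes F :: "'a::comm_ring_1 mat"
  assumes F: "F \<in> carrier_mat m N"
    and c: "c \<in> carrier_vec (m + N)" and d: "d \<in> carrier_vec (m + N)"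
    and c_check: "vec_first c m + F *\<^sub>v vec_last c N = 0\<^sub>v m"
    and d_check: "vec_first d m + F *\<^sub>v vec_last d N = 0\<^sub>v m"
    and last: "vec_last c N = vec_last d N"
  shows "c = d"
proof -
  have "vec_first c m = - (F *\<^sub>v vec_last c N)" "vec_first d m = - (F *\<^sub>v vec_last d N)"
    using c_check d_check F by (simp_all add: add_vec_eq_zero_iff)
  then have "vec_first c m = vec_first d m" using last by simp
  then show ?thesis using vec_first_last_append[OF c] vec_first_last_append[OF d] last by metis
qed

lemma code_mem_iff_puncture:
  fixes C :: "'a::field vec set"
  assumes C: "C \<subseteq> carrier_vec (m + N)" and F: "F \<in> carrier_mat m N"
    and checks: "\<And>i. i < m \<Longrightarrow> unit_vec m i @\<^sub>v row F i \<in> dual_code (m + N) C"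
  shows "c \<in> C \<longleftrightarrow> c \<in> carrier_vec (m + N) \<and> vec_first c m + F *\<^sub>v vec_last c N = 0\<^sub>v m
      \<and> vec_last c N \<in> (\<lambda>c. vec_last c N) ` C"
proof -
  have check: "vec_first c m + F *\<^sub>v vec_last c N = 0\<^sub>v m" if "c \<in> C" for c
    using that C checks systematic_checks_orthogonal_iff[OF F, of c] by (auto simp: dual_code_def)
  show ?thesis
  proof
    assume "c \<in> C"
    then show "c \<in> carrier_vec (m + N) \<and> vec_first c m + F *\<^sub>v vec_last c N = 0\<^sub>v m
        \<and> vec_last c N \<in> (\<lambda>c. vec_last c N) ` C"
      using check C by auto
  next
    assume c: "c \<in> carrier_vec (m + N) \<and> vec_first c m + F *\<^sub>v vec_last c N = 0\<^sub>v m
        \<and> vec_last c N \<in> (\<lambda>c. vec_last c N) ` C"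
    then obtain d where d: "d \<in> C" "vec_last c N = vec_last d N" by auto
    have "c = d"
      using vec_eq_if_systematic_checks_vec_last_eq[OF F _ _ _ check[OF d(1)] d(2)] c d(1) C by auto
    then show "c \<in> C" using d(1) by simp
  qed
qed

lemma puncture_first_linear_code:
  fixes C :: "'a::{finite,field} vec set"
  assumes code: "linear_code C (m + N) k" and F: "F \<in> carrier_mat m N"
    and checks: "\<And>i. i < m \<Longrightarrow> unit_vec m i @\<^sub>v row F i \<in> dual_code (m + N) C"
  shows "linear_code (puncture_first (m + N) m C) N k"
proof -
  have S: "subspace class_ring C (module_vec TYPE('a) (m + N))"
    and dim: "vectorspace.dim class_ring ((module_vec TYPE('a) (m + N))\<lparr>carrier := C\<rparr>) = k"
    using code unfolding linear_code_def by auto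
  have C: "C \<subseteq> carrier_vec (m + N)" by (rule subspace_vec_carrier[OF S])
  have inj: "inj_on (\<lambda>c. vec_last c N) C"
    using code_mem_iff_puncture[OF C F checks]
      vec_eq_if_systematic_checks_vec_last_eq[OF F] by (intro inj_onI) metis
  have add: "vec_last (x + y) N = vec_last x N + vec_last y N" if "x \<in> C" "y \<in> C" for x y
    using C[THEN subsetD, OF that(1)] C[THEN subsetD, OF that(2)]
    by (intro eq_vecI) (auto simp: vec_last_def)
  have smult: "vec_last (a \<cdot>\<^sub>v x) N = a \<cdot>\<^sub>v vec_last x N" if "x \<in> C" for a x
    using C[THEN subsetD, OF that] by (intro eq_vecI) (auto simp: vec_last_def)
  note image = subspace_vec_inj_linear_image[OF S _ add smult inj, of N]
  show ?thesis
    using image dim unfolding linear_code_def puncture_first_eq_vec_last_image[OF C] by simp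
qed

lemma four_block_parity_check:
  fixes C :: "'a::field vec set"
  assumes C: "C \<subseteq> carrier_vec (m + N)" and F: "F \<in> carrier_mat m N"
    and checks: "\<And>i. i < m \<Longrightarrow> unit_vec m i @\<^sub>v row F i \<in> dual_code (m + N) C"
    and HM: "HM \<in> carrier_mat K N"
    and HM_check: "parity_check HM N (puncture_first (m + N) m C)"
  shows "parity_check (four_block_mat (1\<^sub>m m) F (0\<^sub>m K m) HM) (m + N) C"
proof -
  let ?H = "four_block_mat (1\<^sub>m m) F (0\<^sub>m K m) HM"
  have H: "?H \<in> carrier_mat (m + K) (m + N)" using F HM by auto
  have kernel: "?H *\<^sub>v c = 0\<^sub>v (m + K)
      \<longleftrightarrow> vec_first c m + F *\<^sub>v vec_last c N = 0\<^sub>v m \<and> HM *\<^sub>v vec_last c N = 0\<^sub>v K"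
    if c: "c \<in> carrier_vec (m + N)" for c
  proof -
    have "0\<^sub>m K m *\<^sub>v vec_first c m = 0\<^sub>v K" by (intro eq_vecI) auto
    then have "?H *\<^sub>v c = (vec_first c m + F *\<^sub>v vec_last c N) @\<^sub>v (HM *\<^sub>v vec_last c N)"
      using four_block_mat_mult_vec[OF one_carrier_mat F zero_carrier_mat HM
          vec_first_carrier[of c] vec_last_carrier[of c]] vec_first_last_append[OF c] HM
      by simp
    moreover have "(vec_first c m + F *\<^sub>v vec_last c N) @\<^sub>v (HM *\<^sub>v vec_last c N) = 0\<^sub>v m @\<^sub>v 0\<^sub>v K
        \<longleftrightarrow> vec_first c m + F *\<^sub>v vec_last c N = 0\<^sub>v m \<and> HM *\<^sub>v vec_last c N = 0\<^sub>v K"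
      using F by (intro append_vec_eq[where n = m]) auto
    moreover have "0\<^sub>v m @\<^sub>v 0\<^sub>v K = 0\<^sub>v (m + K)" by auto
    ultimately show ?thesis by metis
  qed
  show ?thesis
    using code_mem_iff_puncture[OF C F checks] HM_check H kernel
    unfolding parity_check_def puncture_first_eq_vec_last_image[OF C] by auto
qed

theorem theorem1:
  fixes C :: "'a::{finite,field} vec set"
    and n k r m :: nat and Rec L :: "nat \<Rightarrow> nat set" and e :: "nat \<Rightarrow> nat"
  assumes code: "linear_code C n k"
    and k_pos: "1 \<le> k" and r_pos: "1 \<le> r"
    and loc: "locality_with C n r Rec m L"
    and opt: "optimal_LRC C n k r"
    and adm: "admissible_pattern m L e"
    and PMR: "\<exists>k'. MDS_code (puncture_first n m C) (n - m) k'"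
    and order: "\<forall>i<m. e i = i"
  shows "\<exists>F HM.
     F \<in> carrier_mat m (n - m) \<and> HM \<in> carrier_mat (n - k - m) (n - m) \<and>
     parity_check (four_block_mat (1\<^sub>m m) F (0\<^sub>m (n - k - m) m) HM) n C \<and>
     MDS_code {x \<in> carrier_vec (n - m). HM *\<^sub>v x = 0\<^sub>v (n - k - m)} (n - m) ((n - m) - (n - k - m)) \<and>
     (\<forall>i<m. hweight (row F i) \<le> r)"
proof -
  have adm_id: "admissible_pattern m L (\<lambda>i. i)"
    using adm order unfolding admissible_pattern_def by simp
  obtain N where n: "n = m + N"
    using locality_with_admissible_identity_pattern_le[OF loc adm_id] le_Suc_ex by blast
  have C: "C \<subseteq> carrier_vec (m + N)"
    using code subspace_vec_carrier unfolding linear_code_def n by blast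
  obtain F where F: "F \<in> carrier_mat m N"
    and checks: "\<And>i. i < m \<Longrightarrow> unit_vec m i @\<^sub>v row F i \<in> dual_code (m + N) C"
    and weight: "\<And>i. i < m \<Longrightarrow> hweight (row F i) \<le> r"
    using locality_with_systematic_checks[OF C loc[unfolded n] adm_id] by blast
  let ?C' = "puncture_first (m + N) m C"
  have C'_code: "linear_code ?C' N k"
    by (rule puncture_first_linear_code[OF code[unfolded n] F checks])
  from PMR obtain k' where "MDS_code ?C' N k'" by (auto simp: n)
  with C'_code have C'_MDS: "MDS_code ?C' N k" by (simp add: MDS_code_def linear_code_def)
  have "k \<le> N"
    using C'_code subspace_vec_dim_le unfolding linear_code_def by metis
  obtain HM where HM: "HM \<in> carrier_mat (N - k) N" and HM_check: "parity_check HM N ?C'"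
    using subspace_vec_systematic_parity_check[OF _ _ MDS_code_inj_on_vec_first[OF C'_MDS]]
      C'_code unfolding linear_code_def by blast
  have "{x \<in> carrier_vec N. HM *\<^sub>v x = 0\<^sub>v (N - k)} = ?C'"
    using HM_check HM unfolding parity_check_def by auto
  then show ?thesis
    using F HM weight C'_MDS \<open>k \<le> N\<close> four_block_parity_check[OF C F checks HM HM_check]
    unfolding n by (intro exI[of _ F] exI[of _ HM]) auto
qed

end
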